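(* Let $N\geq 2$ and let $\Sigma$ be the two-sided shift on $\{0,1,\dots,N-1\}^{\mathbb{Z}}$, ordered lexicographically as described below. Then $\Sigma$ has no forbidden order patterns of length $L\leq N-1$, and $\Sigma$ has forbidden order patterns of every length $L\geq N+2$.
   Context: $\{0,1,\dots,N-1\}^{\mathbb{Z}}$ is the set of bisequences $\omega=(\omega_n)_{n\in\mathbb{Z}}$ with $\omega_n\in\{0,\dots,N-1\}$, and $\Sigma(\omega)_n=\omega_{n+1}$. One-sided sequences are compared lexicographically ($(a_0,a_1,\dots)<(b_0,b_1,\dots)$ iff at the first index $n$ where they differ, $a_n<b_n$). The order on bisequences: $\omega<\omega'$ iff $(\omega_0,\omega_1,\dots)<(\omega'_0,\omega'_1,\dots)$, or these right sequences are equal and $(\omega_{-1},\omega_{-2},\dots)<(\omega'_{-1},\omega'_{-2},\dots)$. $\mathcal{S}_L$ is the set of permutations $\pi=[\pi_0,\dots,\pi_{L-1}]$ of $\{0,\dots,L-1\}$. $\omega$ defines $\pi$ if $\Sigma^{\pi_0}(\omega)<\dots<\Sigma^{\pi_{L-1}}(\omega)$; $\pi$ is forbidden if no bisequence defines it. *)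

theory Defs
  imports Main
begin

definition bisequences :: "nat \<Rightarrow> (int \<Rightarrow> nat) set" where
  "bisequences N = {\<omega>. \<forall>n. \<omega> n < N}"

definition shift :: "(int \<Rightarrow> nat) \<Rightarrow> (int \<Rightarrow> nat)" where
  "shift \<omega> = (\<lambda>n. \<omega> (n + 1))"

definition lex_less :: "(nat \<Rightarrow> nat) \<Rightarrow> (nat \<Rightarrow> nat) \<Rightarrow> bool" where
  "lex_less a b \<longleftrightarrow> (\<exists>n. (\<forall>m<n. a m = b m) \<and> a n < b n)"

definition right_seq :: "(int \<Rightarrow> nat) \<Rightarrow> nat \<Rightarrow> nat" where
  "right_seq \<omega> = (\<lambda>n. \<omega> (int n))"

definition left_seq :: "(int \<Rightarrow> nat) \<Rightarrow> nat \<Rightarrow> nat" where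
  "left_seq \<omega> = (\<lambda>n. \<omega> (- int n - 1))"

definition bi_less :: "(int \<Rightarrow> nat) \<Rightarrow> (int \<Rightarrow> nat) \<Rightarrow> bool" where
  "bi_less \<omega> \<omega>' \<longleftrightarrow> lex_less (right_seq \<omega>) (right_seq \<omega>') \<or>
     (right_seq \<omega> = right_seq \<omega>' \<and> lex_less (left_seq \<omega>) (left_seq \<omega>'))"

definition perms :: "nat \<Rightarrow> nat list set" where
  "perms L = {\<pi>. distinct \<pi> \<and> set \<pi> = {0..<L}}"

definition defines_pattern :: "(int \<Rightarrow> nat) \<Rightarrow> nat list \<Rightarrow> bool" where
  "defines_pattern \<omega> \<pi> \<longleftrightarrow>
     (\<forall>i. Suc i < length \<pi> \<longrightarrow> bi_less ((shift ^^ (\<pi> ! i)) \<omega>) ((shift ^^ (\<pi> ! Suc i)) \<omega>))"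

definition forbidden :: "nat \<Rightarrow> nat list \<Rightarrow> bool" where
  "forbidden N \<pi> \<longleftrightarrow> \<not> (\<exists>\<omega>\<in>bisequences N. defines_pattern \<omega> \<pi>)"

end

theory Submission
  imports Defs
begin

text \<open>
  Short patterns are realised by placing the symbol \<open>i\<close> at position \<open>\<pi>\<^sub>i\<close>: the shifted
  bisequences are then already ordered by their first symbol.

  For long patterns, compare two shifts with the same first symbol: their order is the order
  of their shifts by one more step. The zigzag pattern ranks the positions \<open>0, \<dots>, N + 1\<close> as
  \<open>N, N - 2, N - 4, \<dots>\<close> followed by the remaining positions upwards, and it is built so that
  for any two adjacent entries the successor positions occur in the reverse order. Hence along
  the first \<open>N + 1\<close> entries the first symbols must strictly increase, which needs \<open>N + 1\<close>
  distinct symbols.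
\<close>

lemma funpow_shift: "(shift ^^ k) \<omega> = (\<lambda>n. \<omega> (n + int k))"
  by (induction k) (auto simp: shift_def algebra_simps)

lemma lex_less_irrefl: "\<not> lex_less a a"
  by (auto simp: lex_less_def)

lemma lex_less_trans:
  assumes "lex_less a b" "lex_less b c"
  shows "lex_less a c"
proof -
  obtain n1 where n1: "\<forall>m<n1. a m = b m" "a n1 < b n1"
    using assms(1) by (auto simp: lex_less_def)
  obtain n2 where n2: "\<forall>m<n2. b m = c m" "b n2 < c n2"
    using assms(2) by (auto simp: lex_less_def)
  have "(\<forall>m<min n1 n2. a m = c m) \<and> a (min n1 n2) < c (min n1 n2)"
    using n1 n2 by (cases n1 n2 rule: linorder_cases) (auto simp: min_def)
  then show ?thesis
    unfolding lex_less_def by blast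
qed

lemma lex_less_Cons: "lex_less a b \<Longrightarrow> lex_less (case_nat x a) (case_nat x b)"
  unfolding lex_less_def
  by (metis less_Suc_eq_0_disj nat.case)

lemma lex_less_tail:
  assumes "lex_less a b" "a 0 = b 0"
  shows "lex_less (\<lambda>n. a (Suc n)) (\<lambda>n. b (Suc n))"
proof -
  obtain n where n: "\<forall>m<n. a m = b m" "a n < b n"
    using assms(1) by (auto simp: lex_less_def)
  with assms(2) obtain k where "n = Suc k"
    by (cases n) auto
  with n show ?thesis
    unfolding lex_less_def by (intro exI[of _ k]) auto
qed

lemma lex_less_imp_head_le: "lex_less a b \<Longrightarrow> a 0 \<le> b 0"
  unfolding lex_less_def
  by (metis bot_nat_0.not_eq_extremum less_or_eq_imp_le)

lemma bi_less_irrefl: "\<not> bi_less a a"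
  by (auto simp: bi_less_def lex_less_irrefl)

lemma bi_less_trans: "bi_less a b \<Longrightarrow> bi_less b c \<Longrightarrow> bi_less a c"
  unfolding bi_less_def using lex_less_trans by metis

lemma bi_less_asym: "bi_less a b \<Longrightarrow> \<not> bi_less b a"
  using bi_less_trans bi_less_irrefl by blast

lemma right_seq_shift: "right_seq (shift \<omega>) = (\<lambda>n. right_seq \<omega> (Suc n))"
  by (auto simp: right_seq_def shift_def algebra_simps)

lemma left_seq_shift: "left_seq (shift \<omega>) = case_nat (\<omega> 0) (left_seq \<omega>)"
proof
  fix n
  show "left_seq (shift \<omega>) n = case_nat (\<omega> 0) (left_seq \<omega>) n"
    by (cases n) (auto simp: left_seq_def shift_def intro: arg_cong[where f = \<omega>])
qed

lemma bi_less_shift: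
  assumes "bi_less a b" "a 0 = b 0"
  shows "bi_less (shift a) (shift b)"
proof -
  have "right_seq a 0 = right_seq b 0"
    using assms(2) by (simp add: right_seq_def)
  then have "lex_less (right_seq (shift a)) (right_seq (shift b))"
    if "lex_less (right_seq a) (right_seq b)"
    using lex_less_tail[OF that] by (simp add: right_seq_shift)
  moreover have "lex_less (left_seq (shift a)) (left_seq (shift b))"
    if "lex_less (left_seq a) (left_seq b)"
    using lex_less_Cons[OF that] assms(2) by (simp add: left_seq_shift)
  ultimately show ?thesis
    using assms(1) by (auto simp: bi_less_def right_seq_shift)
qed

lemma bi_less_imp_head_le: "bi_less a b \<Longrightarrow> a 0 \<le> b 0"
  using lex_less_imp_head_le
  by (fastforce simp: bi_less_def right_seq_def dest: fun_cong[of _ _ 0])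

lemma defines_pattern_iff_sorted_wrt:
  "defines_pattern \<omega> \<pi> \<longleftrightarrow> sorted_wrt (\<lambda>i j. bi_less ((shift ^^ i) \<omega>) ((shift ^^ j) \<omega>)) \<pi>"
  by (subst sorted_wrt_iff_nth_Suc_transp) (auto simp: defines_pattern_def transp_def
      intro: bi_less_trans)

lemma defines_pattern_if_heads_increasing:
  assumes "\<forall>i. Suc i < length \<pi> \<longrightarrow> \<omega> (int (\<pi> ! i)) < \<omega> (int (\<pi> ! Suc i))"
  shows "defines_pattern \<omega> \<pi>"
  using assms unfolding defines_pattern_def bi_less_def lex_less_def
  by (auto simp: right_seq_def funpow_shift intro!: exI[of _ 0])

lemma perms_not_forbidden:
  assumes "\<pi> \<in> perms L" "L \<le> N" "0 < N"
  shows "\<not> forbidden N \<pi>"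
proof -
  have len: "length \<pi> = L" and bij: "bij_betw ((!) \<pi>) {..<L} {0..<L}"
    using assms(1) distinct_card[of \<pi>] bij_betw_nth[of \<pi>] by (auto simp: perms_def)
  define rank where "rank = inv_into {..<L} ((!) \<pi>)"
  have rank_less: "x < L \<Longrightarrow> rank x < L" for x
    using bij_betw_apply[OF bij_betw_inv_into[OF bij]] by (auto simp: rank_def)
  have rank_nth: "i < L \<Longrightarrow> rank (\<pi> ! i) = i" for i
    using bij by (simp add: rank_def bij_betw_def)
  define \<omega> where "\<omega> n = (if 0 \<le> n \<and> n < int L then rank (nat n) else 0)" for n
  have "\<omega> n < N" for n
    using assms(2,3) rank_less[of "nat n"] by (auto simp: \<omega>_def nat_less_iff)
  then have "\<omega> \<in> bisequences N"
    by (simp add: bisequences_def)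
  moreover have "defines_pattern \<omega> \<pi>"
    using bij_betw_apply[OF bij] by (intro defines_pattern_if_heads_increasing)
      (simp add: \<omega>_def len rank_nth)
  ultimately show ?thesis
    by (auto simp: forbidden_def)
qed

definition zigzag :: "nat \<Rightarrow> nat \<Rightarrow> nat" where
  "zigzag N a = (if 2 * a \<le> N then N - 2 * a else 2 * a - N - 1)"

definition zigzag_pattern :: "nat \<Rightarrow> nat \<Rightarrow> nat list" where
  "zigzag_pattern N L = map (\<lambda>a. if a < N + 2 then zigzag N a else a) [0..<L]"

lemma zigzag_pattern_in_perms:
  assumes "N + 2 \<le> L"
  shows "zigzag_pattern N L \<in> perms L"
proof -
  let ?f = "\<lambda>a. if a < N + 2 then zigzag N a else a"
  have inj: "inj_on ?f {0..<L}"
    unfolding inj_on_def zigzag_def by (auto split: if_splits) presburger+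
  have "?f ` {0..<L} \<subseteq> {0..<L}"
    using assms by (auto simp: zigzag_def)
  with inj have "?f ` {0..<L} = {0..<L}"
    by (intro endo_inj_surj) auto
  with inj show ?thesis
    by (auto simp: perms_def zigzag_pattern_def distinct_map)
qed

lemma zigzag_successors_reversed:
  assumes "a < N"
  shows "\<exists>b b'. b' < b \<and> b \<le> N + 1 \<and>
           zigzag N b = Suc (zigzag N a) \<and> zigzag N b' = Suc (zigzag N (Suc a))"
proof -
  consider "2 * (a + 1) \<le> N" | "N = 2 * a" | "N = 2 * a + 1" | "2 * a > N"
    by atomize_elim presburger
  then show ?thesis
  proof cases
    case 1
    then show ?thesis using assms
      by (intro exI[of _ "N - a + 1"] exI[of _ "N - a"]) (simp add: zigzag_def; arith)
  next
    case 2
    then show ?thesis using assms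
      by (intro exI[of _ "a + 1"] exI[of _ "a - 1"]) (simp add: zigzag_def; arith)
  next
    case 3
    then show ?thesis using assms
      by (intro exI[of _ "a + 2"] exI[of _ "a"]) (simp add: zigzag_def; arith)
  next
    case 4
    then show ?thesis using assms
      by (intro exI[of _ "N - a"] exI[of _ "N - a - 1"]) (simp add: zigzag_def; arith)
  qed
qed

lemma zigzag_heads_increasing:
  assumes "defines_pattern \<omega> (zigzag_pattern N L)" "N + 2 \<le> L" "a < N"
  shows "\<omega> (int (zigzag N a)) < \<omega> (int (zigzag N (Suc a)))"
proof -
  define Z where "Z i = (shift ^^ zigzag N i) \<omega>" for i
  have Z_less: "bi_less (Z i) (Z j)" if "i < j" "j \<le> N + 1" for i j
    using assms(1,2) that sorted_wrt_nth_less[of _ "zigzag_pattern N L" i j]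
    by (simp add: defines_pattern_iff_sorted_wrt zigzag_pattern_def Z_def)
  have Z_head: "Z i 0 = \<omega> (int (zigzag N i))" for i
    by (simp add: Z_def funpow_shift)
  have less: "bi_less (Z a) (Z (Suc a))"
    using Z_less assms(3) by simp
  obtain b b' where b: "b' < b" "b \<le> N + 1" "zigzag N b = Suc (zigzag N a)"
      "zigzag N b' = Suc (zigzag N (Suc a))"
    using zigzag_successors_reversed[OF assms(3)] by blast
  have "\<omega> (int (zigzag N a)) \<noteq> \<omega> (int (zigzag N (Suc a)))"
  proof
    assume "\<omega> (int (zigzag N a)) = \<omega> (int (zigzag N (Suc a)))"
    then have "bi_less (shift (Z a)) (shift (Z (Suc a)))"
      by (intro bi_less_shift[OF less]) (simp add: Z_head)
    then have "bi_less (Z b) (Z b')"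
      using b(3,4) by (simp add: Z_def flip: funpow_Suc_right[unfolded comp_def])
    with Z_less[OF b(1,2)] show False
      using bi_less_asym by blast
  qed
  with bi_less_imp_head_le[OF less] show ?thesis
    by (simp add: Z_head)
qed

lemma zigzag_pattern_forbidden:
  assumes "N + 2 \<le> L"
  shows "forbidden N (zigzag_pattern N L)"
  unfolding forbidden_def
proof
  assume "\<exists>\<omega>\<in>bisequences N. defines_pattern \<omega> (zigzag_pattern N L)"
  then obtain \<omega> where bounded: "\<forall>n. \<omega> n < N" and pattern: "defines_pattern \<omega> (zigzag_pattern N L)"
    by (auto simp: bisequences_def)
  have "a \<le> \<omega> (int (zigzag N a))" if "a \<le> N" for a
    using that
  proof (induction a)
    case (Suc a)
    then show ?case
      using zigzag_heads_increasing[OF pattern assms, of a] by simp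
  qed simp
  with bounded show False
    using leD by blast
qed

theorem proposition6:
  fixes N :: nat
  assumes "N \<ge> 2"
  shows "(\<forall>L. 1 \<le> L \<and> L \<le> N - 1 \<longrightarrow> (\<forall>\<pi>\<in>perms L. \<not> forbidden N \<pi>)) \<and>
         (\<forall>L. L \<ge> N + 2 \<longrightarrow> (\<exists>\<pi>\<in>perms L. forbidden N \<pi>))"
  using assms perms_not_forbidden zigzag_pattern_in_perms zigzag_pattern_forbidden
  by (metis diff_le_self le_trans zero_less_numeral less_le_trans)

end
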